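(* Let $\alpha\in(0,1]$ be rational, $\lambda\in\mathbb N$, $P$ a profile, and $N'\subseteq N$ a group that is $(\alpha,\lambda)$-significant in $P$. Let $r$ be any ranking that Reverse SeqPAV may output on $P$ (under any tie-breaking). Then there exists a real number $y\ge\lambda$ such that $\mathrm{avg}(N',r_{\le k})\ge y$ for $k=\min(m,\lfloor y/\alpha\rfloor)$.
   Context: Let $N=[n]$ be a finite set of voters and $A$ a finite set of $m$ alternatives; a profile $P=(A_1,\dots,A_n)$ gives each voter $i$ a non-empty approval set $A_i\subseteq A$. A ranking $r=(r_1,\dots,r_m)$ is a linear order of $A$ and $r_{\le k}=\{r_1,\dots,r_k\}$. For nonempty $N'\subseteq N$ and $S\subseteq A$, $\mathrm{avg}(N',S)=\frac1{|N'|}\sum_{i\in N'}|A_i\cap S|$. The cohesiveness of $N'$ is $\lambda(N')=|\bigcap_{i\in N'}A_i|$; $N'$ is $(\alpha,\lambda)$-significant in $P$ if $|N'|=\lceil\alpha n\rceil$ and $\lambda(N')\ge\lambda$. For $S\subseteq A$, $w_{\mathrm{PAV}}(S)=\sum_{i\in N}\sum_{j=1}^{|A_i\cap S|}\frac1j$. Reverse SeqPAV builds a ranking from the bottom: it starts with $S=A$ and the empty ranking, and at each step picks $a\in S$ minimizing $w_{\mathrm{PAV}}(S)-w_{\mathrm{PAV}}(S\setminus\{a\})$ (ties broken arbitrarily), removes $a$ from $S$ and prepends it to the ranking, until $S$ is empty. *)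

theory Defs
  imports Complex_Main
begin

definition is_profile :: "'v set \<Rightarrow> 'b set \<Rightarrow> ('v \<Rightarrow> 'b set) \<Rightarrow> bool" where
  "is_profile N A Ap \<longleftrightarrow> finite N \<and> finite A \<and> (\<forall>i\<in>N. Ap i \<noteq> {} \<and> Ap i \<subseteq> A)"

definition avg :: "('v \<Rightarrow> 'b set) \<Rightarrow> 'v set \<Rightarrow> 'b set \<Rightarrow> real" where
  "avg Ap N' S = (\<Sum>i\<in>N'. real (card (Ap i \<inter> S))) / real (card N')"

definition cohesiveness :: "('v \<Rightarrow> 'b set) \<Rightarrow> 'v set \<Rightarrow> nat" where
  "cohesiveness Ap N' = card (\<Inter>i\<in>N'. Ap i)"

definition significant :: "'v set \<Rightarrow> ('v \<Rightarrow> 'b set) \<Rightarrow> real \<Rightarrow> nat \<Rightarrow> 'v set \<Rightarrow> bool" where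
  "significant N Ap \<alpha> l N' \<longleftrightarrow> N' \<subseteq> N \<and> card N' = nat \<lceil>\<alpha> * real (card N)\<rceil>
      \<and> cohesiveness Ap N' \<ge> l"

definition w_pav :: "'v set \<Rightarrow> ('v \<Rightarrow> 'b set) \<Rightarrow> 'b set \<Rightarrow> real" where
  "w_pav N Ap S = (\<Sum>i\<in>N. \<Sum>j=1..card (Ap i \<inter> S). 1 / real j)"

text \<open>Reverse SeqPAV: rev_seqpav N Ap S r holds iff, starting from the remaining set S,
  the algorithm (under some tie-breaking) can place the elements of S in the order r
  (r being the top part of the final ranking, built from the bottom by prepending).\<close>
inductive rev_seqpav :: "'v set \<Rightarrow> ('v \<Rightarrow> 'b set) \<Rightarrow> 'b set \<Rightarrow> 'b list \<Rightarrow> bool"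
  for N :: "'v set" and Ap :: "'v \<Rightarrow> 'b set" where
  empty: "rev_seqpav N Ap {} []"
| step: "\<lbrakk> a \<in> S;
          \<forall>b\<in>S. w_pav N Ap S - w_pav N Ap (S - {a}) \<le> w_pav N Ap S - w_pav N Ap (S - {b});
          rev_seqpav N Ap (S - {a}) r \<rbrakk>
         \<Longrightarrow> rev_seqpav N Ap S (r @ [a])"

end

theory Submission
  imports Defs "HOL-Analysis.Convex"
begin

text \<open>
  Let C be the set of alternatives approved by every member of N', and let a be the element
  of C that Reverse SeqPAV removes last, so that a is removed from the set S of the top s
  alternatives. The marginal PAV contributions of the elements of S sum to at most |N|, and a
  has the least one, so its contribution is at most |N|/s. On the other hand a is approved by
  all of N', hence by AM-HM its contribution is at least |N'| / avg(N',S). Thus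
  avg(N',S) \<ge> s|N'|/|N| \<ge> s\<alpha>. If s\<alpha> \<ge> \<lambda> take y = s\<alpha>; otherwise take y = \<lambda>, for then the prefix
  of length \<lfloor>\<lambda>/\<alpha>\<rfloor> contains all of C and every member of N' approves at least \<lambda> of it.
\<close>

lemma rev_seqpav_set_distinct:
  assumes "rev_seqpav N Ap S r"
  shows "set r = S \<and> distinct r"
  using assms by (induction rule: rev_seqpav.induct) auto

lemma rev_seqpav_take:
  assumes "rev_seqpav N Ap S r"
  shows "rev_seqpav N Ap (set (take j r)) (take j r)"
  using assms
proof (induction rule: rev_seqpav.induct)
  case empty
  then show ?case by (simp add: rev_seqpav.empty)
next
  case (step a S r)
  show ?case
  proof (cases "j \<le> length r")
    case True
    then show ?thesis using step.IH by simp
  next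
    case False
    have "set (r @ [a]) = S"
      using rev_seqpav_set_distinct[OF step.hyps(3)] step.hyps(1) by auto
    with False step.hyps show ?thesis by (auto intro: rev_seqpav.step)
  qed
qed

lemma rev_seqpav_snocD:
  assumes "rev_seqpav N Ap S (r @ [a])"
  shows "a \<in> S"
    and "\<forall>b\<in>S. w_pav N Ap S - w_pav N Ap (S - {a}) \<le> w_pav N Ap S - w_pav N Ap (S - {b})"
  using assms by (cases rule: rev_seqpav.cases; auto)+

lemma w_pav_diff_remove:
  assumes "finite S" "b \<in> S"
  shows "w_pav N Ap S - w_pav N Ap (S - {b}) =
     (\<Sum>i\<in>N. if b \<in> Ap i then 1 / real (card (Ap i \<inter> S)) else 0)"
  unfolding w_pav_def sum_subtractf[symmetric]
proof (rule sum.cong)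
  fix i
  show "(\<Sum>j=1..card (Ap i \<inter> S). 1 / real j) - (\<Sum>j=1..card (Ap i \<inter> (S - {b})). 1 / real j)
      = (if b \<in> Ap i then 1 / real (card (Ap i \<inter> S)) else 0)"
  proof (cases "b \<in> Ap i")
    case True
    then have "Ap i \<inter> S = insert b (Ap i \<inter> (S - {b}))" using assms(2) by auto
    then have "card (Ap i \<inter> S) = Suc (card (Ap i \<inter> (S - {b})))"
      using assms(1) by simp
    then show ?thesis using True by (simp add: sum.cl_ivl_Suc)
  next
    case False
    then have "Ap i \<inter> (S - {b}) = Ap i \<inter> S" by auto
    then show ?thesis using False by simp
  qed
qed simp

lemma sum_w_pav_diff_remove_le:
  assumes "finite S"
  shows "(\<Sum>b\<in>S. w_pav N Ap S - w_pav N Ap (S - {b})) \<le> real (card N)"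
proof -
  have "(\<Sum>b\<in>S. w_pav N Ap S - w_pav N Ap (S - {b}))
      = (\<Sum>i\<in>N. \<Sum>b\<in>S. if b \<in> Ap i then 1 / real (card (Ap i \<inter> S)) else 0)"
    using assms by (simp add: w_pav_diff_remove sum.swap[of _ S])
  also have "\<dots> = (\<Sum>i\<in>N. real (card (S \<inter> Ap i)) / real (card (Ap i \<inter> S)))"
    using assms by (simp add: sum.inter_restrict[symmetric])
  also have "\<dots> \<le> (\<Sum>i\<in>N. 1)"
    by (rule sum_mono) (simp add: Int_commute)
  finally show ?thesis by simp
qed

lemma sum_inverse_mult_sum_ge_card_squared:
  fixes x :: "'a \<Rightarrow> real"
  assumes "\<And>i. i \<in> I \<Longrightarrow> x i > 0"
  shows "real (card I) ^ 2 \<le> (\<Sum>i\<in>I. 1 / x i) * (\<Sum>i\<in>I. x i)"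
proof -
  have "(\<Sum>i\<in>I. 1 / sqrt (x i) * sqrt (x i))\<^sup>2
      \<le> (\<Sum>i\<in>I. (1 / sqrt (x i))\<^sup>2) * (\<Sum>i\<in>I. (sqrt (x i))\<^sup>2)"
    by (rule Cauchy_Schwarz_ineq_sum)
  also have "\<dots> = (\<Sum>i\<in>I. 1 / x i) * (\<Sum>i\<in>I. x i)"
    using assms by (simp add: power_divide less_imp_le)
  also have "(\<Sum>i\<in>I. 1 / sqrt (x i) * sqrt (x i)) = (\<Sum>i\<in>I. 1)"
    using assms by (intro sum.cong) (simp_all add: less_imp_neq[symmetric])
  finally show ?thesis by simp
qed

lemma avg_ge_of_min_marginal:
  assumes "finite N" "N' \<subseteq> N" "N' \<noteq> {}" "finite S" "a \<in> S"
    and approved: "\<And>i. i \<in> N' \<Longrightarrow> a \<in> Ap i"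
    and min_marginal:
      "\<forall>b\<in>S. w_pav N Ap S - w_pav N Ap (S - {a}) \<le> w_pav N Ap S - w_pav N Ap (S - {b})"
  shows "real (card S) * real (card N') \<le> real (card N) * avg Ap N' S"
proof -
  define D where "D b = w_pav N Ap S - w_pav N Ap (S - {b})" for b
  define x where "x i = real (card (Ap i \<inter> S))" for i
  have "finite N'" using assms(1,2) finite_subset by blast
  have x_pos: "x i > 0" if "i \<in> N'" for i
    using approved[OF that] assms(4,5) unfolding x_def by (auto simp: card_gt_0_iff)
  have "real (card S) * D a \<le> (\<Sum>b\<in>S. D b)"
    using min_marginal unfolding D_def by (intro sum_bounded_below) auto
  also have "\<dots> \<le> real (card N)"
    unfolding D_def by (rule sum_w_pav_diff_remove_le[OF assms(4)])
  finally have D_upper: "real (card S) * D a \<le> real (card N)" .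
  have "(\<Sum>i\<in>N'. 1 / x i) = (\<Sum>i\<in>N'. if a \<in> Ap i then 1 / real (card (Ap i \<inter> S)) else 0)"
    using approved unfolding x_def by (intro sum.cong) auto
  also have "\<dots> \<le> D a"
    unfolding D_def w_pav_diff_remove[OF assms(4,5)] by (rule sum_mono2[OF assms(1,2)]) auto
  finally have D_lower: "(\<Sum>i\<in>N'. 1 / x i) \<le> D a" .
  have T_nonneg: "(\<Sum>i\<in>N'. x i) \<ge> 0"
    using x_pos by (intro sum_nonneg) (auto intro: less_imp_le)
  have "real (card S) * real (card N') ^ 2 \<le> real (card S) * ((\<Sum>i\<in>N'. 1 / x i) * (\<Sum>i\<in>N'. x i))"
    using sum_inverse_mult_sum_ge_card_squared[of N' x] x_pos by (simp add: mult_left_mono)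
  also have "\<dots> \<le> real (card S) * D a * (\<Sum>i\<in>N'. x i)"
    using D_lower T_nonneg by (simp add: mult_left_mono mult_right_mono mult.assoc)
  also have "\<dots> \<le> real (card N) * (\<Sum>i\<in>N'. x i)"
    using D_upper T_nonneg by (rule mult_right_mono)
  finally have "real (card S) * real (card N') ^ 2 \<le> real (card N) * (\<Sum>i\<in>N'. x i)" .
  moreover have "real (card N') > 0" using \<open>finite N'\<close> assms(3) by (simp add: card_gt_0_iff)
  ultimately show ?thesis
    unfolding avg_def x_def[symmetric] by (simp add: le_divide_eq power2_eq_square mult.assoc)
qed

lemma avg_nonneg: "avg Ap N' S \<ge> 0"
  unfolding avg_def by (simp add: sum_nonneg)

lemma rev_seqpav_prefix_avg:
  assumes "finite N" "N' \<subseteq> N" "N' \<noteq> {}" "rev_seqpav N Ap A r"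
    and "0 < s" "s \<le> length r" "\<And>i. i \<in> N' \<Longrightarrow> r ! (s - 1) \<in> Ap i"
  shows "real s * real (card N') \<le> real (card N) * avg Ap N' (set (take s r))"
proof -
  have take_s: "take s r = take (s - 1) r @ [r ! (s - 1)]"
    using take_Suc_conv_app_nth[of "s - 1" r] assms(5,6) by simp
  have run: "rev_seqpav N Ap (set (take s r)) (take (s - 1) r @ [r ! (s - 1)])"
    using rev_seqpav_take[OF assms(4), of s] take_s by simp
  have "card (set (take s r)) = s"
    using rev_seqpav_set_distinct[OF assms(4)] assms(6) by (simp add: distinct_card)
  moreover have "real (card (set (take s r))) * real (card N')
      \<le> real (card N) * avg Ap N' (set (take s r))"
    using rev_seqpav_snocD[OF run] assms(7)
    by (intro avg_ge_of_min_marginal[OF assms(1-3)]) auto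
  ultimately show ?thesis by simp
qed

lemma rev_seqpav_common_prefix_avg:
  assumes "finite N" "N' \<subseteq> N" "N' \<noteq> {}" "rev_seqpav N Ap A r"
    and "C \<subseteq> A" "\<And>i. i \<in> N' \<Longrightarrow> C \<subseteq> Ap i"
  obtains s where "s \<le> length r" "C \<subseteq> set (take s r)"
    "real s * real (card N') \<le> real (card N) * avg Ap N' (set (take s r))"
proof -
  define P where "P j \<longleftrightarrow> C \<subseteq> set (take j r)" for j
  define s where "s = (LEAST j. P j)"
  have "P (length r)"
    using assms(5) rev_seqpav_set_distinct[OF assms(4)] unfolding P_def by simp
  then have s_le: "s \<le> length r" and C_in: "C \<subseteq> set (take s r)"
    unfolding s_def using Least_le LeastI unfolding P_def by fast+
  show ?thesis
  proof (cases "s = 0")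
    case True
    with s_le C_in show ?thesis by (intro that[of s]) (simp_all add: avg_nonneg)
  next
    case False
    have "\<not> P (s - 1)"
      using not_less_Least[of "s - 1" P] False unfolding s_def by simp
    then have "r ! (s - 1) \<in> C"
      using C_in take_Suc_conv_app_nth[of "s - 1" r] False s_le unfolding P_def by auto
    then have "real s * real (card N') \<le> real (card N) * avg Ap N' (set (take s r))"
      using assms(6) False s_le by (intro rev_seqpav_prefix_avg[OF assms(1-4)]) auto
    with s_le C_in show ?thesis by (rule that)
  qed
qed

lemma avg_ge_card_common:
  assumes "finite T" "C \<subseteq> T" "N' \<noteq> {}" "finite N'" "\<And>i. i \<in> N' \<Longrightarrow> C \<subseteq> Ap i"
  shows "real (card C) \<le> avg Ap N' T"
proof -
  have "real (card N') * real (card C) \<le> (\<Sum>i\<in>N'. real (card (Ap i \<inter> T)))"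
    using assms by (intro sum_bounded_below) (simp add: card_mono)
  then show ?thesis
    unfolding avg_def using assms(3,4) by (simp add: le_divide_eq mult.commute card_gt_0_iff)
qed

lemma significant_card_ge:
  assumes "significant N Ap \<alpha> l N'"
  shows "\<alpha> * real (card N) \<le> real (card N')"
  using assms unfolding significant_def by linarith

lemma exists_threshold_index:
  fixes f :: "nat \<Rightarrow> real" and \<alpha> l :: real
  assumes "0 < \<alpha>" "s \<le> m" "real s * \<alpha> \<le> f s"
    and "\<And>k. s \<le> k \<Longrightarrow> l \<le> f k"
  shows "\<exists>y\<ge>l. y \<le> f (min m (nat \<lfloor>y / \<alpha>\<rfloor>))"
proof (cases "l \<le> real s * \<alpha>")
  case True
  have "min m (nat \<lfloor>real s * \<alpha> / \<alpha>\<rfloor>) = s" using assms(1,2) by simp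
  with True assms(3) show ?thesis by (intro exI[of _ "real s * \<alpha>"]) simp
next
  case False
  then have "real s \<le> l / \<alpha>" using assms(1) by (simp add: le_divide_eq)
  then have "s \<le> min m (nat \<lfloor>l / \<alpha>\<rfloor>)" using assms(2) by (simp add: le_nat_floor)
  with assms(4) show ?thesis by (intro exI[of _ l]) simp
qed

theorem theorem6:
  fixes N :: "'v set" and A :: "'b set" and Ap :: "'v \<Rightarrow> 'b set"
    and \<alpha> :: real and l :: nat and N' :: "'v set" and r :: "'b list"
  assumes "is_profile N A Ap" and "N \<noteq> {}"
    and "\<alpha> \<in> \<rat>" and "0 < \<alpha>" and "\<alpha> \<le> 1"
    and "significant N Ap \<alpha> l N'"
    and "rev_seqpav N Ap A r"
  shows "\<exists>y::real. y \<ge> real l \<and>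
           avg Ap N' (set (take (min (card A) (nat \<lfloor>y / \<alpha>\<rfloor>)) r)) \<ge> y"
proof -
  define C where "C = (\<Inter>i\<in>N'. Ap i)"
  have N'N: "N' \<subseteq> N" and "l \<le> card C" and card_N': "\<alpha> * real (card N) \<le> real (card N')"
    using assms(6) significant_card_ge[OF assms(6)]
    unfolding significant_def cohesiveness_def C_def by auto
  have fin: "finite N" and ApA: "\<And>i. i \<in> N \<Longrightarrow> Ap i \<subseteq> A"
    using assms(1) unfolding is_profile_def by auto
  have "real (card N) > 0" using assms(2) fin by (simp add: card_gt_0_iff)
  with assms(4) have "\<alpha> * real (card N) > 0" by simp
  with card_N' have "N' \<noteq> {}" by auto
  have C_sub: "\<And>i. i \<in> N' \<Longrightarrow> C \<subseteq> Ap i" unfolding C_def by blast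
  with \<open>N' \<noteq> {}\<close> ApA N'N have "C \<subseteq> A" by blast
  obtain s where s: "s \<le> length r" "C \<subseteq> set (take s r)"
    "real s * real (card N') \<le> real (card N) * avg Ap N' (set (take s r))"
    using rev_seqpav_common_prefix_avg[OF fin N'N \<open>N' \<noteq> {}\<close> assms(7) \<open>C \<subseteq> A\<close> C_sub] .
  have "real (card N) * (real s * \<alpha>) \<le> real (card N) * avg Ap N' (set (take s r))"
    using s(3) mult_left_mono[OF card_N', of "real s"] by (simp add: ac_simps)
  then have "real s * \<alpha> \<le> avg Ap N' (set (take s r))"
    using \<open>real (card N) > 0\<close> by simp
  moreover have "real l \<le> avg Ap N' (set (take k r))" if "s \<le> k" for k
  proof -
    have "C \<subseteq> set (take k r)" by (rule subset_trans[OF s(2) set_take_subset_set_take[OF that]])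
    then have "real (card C) \<le> avg Ap N' (set (take k r))"
      using \<open>N' \<noteq> {}\<close> finite_subset[OF N'N fin] C_sub by (intro avg_ge_card_common) auto
    with \<open>l \<le> card C\<close> show ?thesis by linarith
  qed
  moreover have "length r = card A"
    using rev_seqpav_set_distinct[OF assms(7)] by (metis distinct_card)
  ultimately show ?thesis
    using exists_threshold_index[OF assms(4) s(1), of "\<lambda>k. avg Ap N' (set (take k r))"] by simp
qed

end
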